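(* For any tournament $\mathrel{W}$ and any ranking $R$ that is both $\mathrel{W}$-feasible and $\mathrel{W}$-efficient, there exists a regret-free strategy whose outcome under $\mathrel{W}$ is $R$.
   Context: Let $\mathcal{X}$ be a finite set of alternatives. A proto-ranking is an irreflexive and transitive binary relation on $\mathcal{X}$; a ranking is a total proto-ranking; a tournament is a total and asymmetric binary relation on $\mathcal{X}$. The chair has a fixed preference $\succ$, a ranking on $\mathcal{X}$. Interaction: given a tournament $\mathrel{W}$, set $R_0=\varnothing$; in each period $t\geq1$ with $R_{t-1}$ not total, the chair offers a pair $\{x,y\}$ of distinct alternatives unranked by $R_{t-1}$, the winner is $x$ if $x\mathrel{W}y$ and $y$ otherwise, and $R_t$ is the transitive closure of $R_{t-1}\cup\{(\text{winner},\text{loser})\}$; stop when $R_t$ is total. A history is a sequence of (winner, loser) pairs that can arise this way; a strategy assigns to each non-terminal history a pair unranked at it. The outcome of $\sigma$ under $\mathrel{W}$ is the final ranking. A ranking is $\mathrel{W}$-feasible if it is the outcome under $\mathrel{W}$ of some strategy. $R$ is more aligned with $\succ$ than $R'$ if for all $x\succ y$, $xR'y$ implies $xRy$. A ranking is $\mathrel{W}$-unimprovable if no other $\mathrel{W}$-feasible ranking is more aligned with $\succ$. A strategy is regret-free if for every tournament $\mathrel{W}$ its outcome under $\mathrel{W}$ is $\mathrel{W}$-unimprovable. A ranking $R$ is $\mathrel{W}$-efficient if $x\succ y$ and $x\mathrel{W}y$ imply $xRy$. *)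

theory Defs
  imports Main
begin

text \<open>Alternatives: the elements of a finite type 'a (so the set of alternatives is UNIV).
  Binary relations are sets of pairs; (x,y) \<in> R means x is ranked above y.\<close>

definition proto_ranking :: "'a rel \<Rightarrow> bool" where
  "proto_ranking R \<longleftrightarrow> irrefl R \<and> trans R"

definition ranking :: "'a rel \<Rightarrow> bool" where
  "ranking R \<longleftrightarrow> proto_ranking R \<and> total R"

definition tournament :: "'a rel \<Rightarrow> bool" where
  "tournament W \<longleftrightarrow> total W \<and> asym W"

text \<open>Relation generated by a history (list of (winner, loser) pairs, oldest first):
  R_0 = {} and R_t = transitive closure of R_(t-1) plus the new pair.\<close>
definition rel_hist :: "('a \<times> 'a) list \<Rightarrow> 'a rel" where
  "rel_hist h = foldl (\<lambda>R p. trancl (R \<union> {p})) {} h"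

definition unranked :: "'a rel \<Rightarrow> 'a \<Rightarrow> 'a \<Rightarrow> bool" where
  "unranked R x y \<longleftrightarrow> x \<noteq> y \<and> (x, y) \<notin> R \<and> (y, x) \<notin> R"

inductive hist_under :: "'a rel \<Rightarrow> ('a \<times> 'a) list \<Rightarrow> bool" for W where
  Nil: "hist_under W []"
| Step: "\<lbrakk> hist_under W h; \<not> total (rel_hist h); unranked (rel_hist h) x y; (x, y) \<in> W \<rbrakk>
          \<Longrightarrow> hist_under W (h @ [(x, y)])"

definition history :: "('a \<times> 'a) list \<Rightarrow> bool" where
  "history h \<longleftrightarrow> (\<exists>W. tournament W \<and> hist_under W h)"

definition strategy :: "(('a \<times> 'a) list \<Rightarrow> 'a set) \<Rightarrow> bool" where
  "strategy \<sigma> \<longleftrightarrow> (\<forall>h. history h \<and> \<not> total (rel_hist h) \<longrightarrow>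
       (\<exists>x y. \<sigma> h = {x, y} \<and> unranked (rel_hist h) x y))"

inductive reaches :: "'a rel \<Rightarrow> (('a \<times> 'a) list \<Rightarrow> 'a set) \<Rightarrow> ('a \<times> 'a) list \<Rightarrow> bool"
  for W \<sigma> where
  Nil: "reaches W \<sigma> []"
| Step: "\<lbrakk> reaches W \<sigma> h; \<not> total (rel_hist h); \<sigma> h = {x, y}; x \<noteq> y; (x, y) \<in> W \<rbrakk>
          \<Longrightarrow> reaches W \<sigma> (h @ [(x, y)])"

definition is_outcome :: "'a rel \<Rightarrow> (('a \<times> 'a) list \<Rightarrow> 'a set) \<Rightarrow> 'a rel \<Rightarrow> bool" where
  "is_outcome W \<sigma> R \<longleftrightarrow> (\<exists>h. reaches W \<sigma> h \<and> total (rel_hist h) \<and> R = rel_hist h)"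

definition feasible :: "'a rel \<Rightarrow> 'a rel \<Rightarrow> bool" where
  "feasible W R \<longleftrightarrow> ranking R \<and> (\<exists>\<sigma>. strategy \<sigma> \<and> is_outcome W \<sigma> R)"

definition more_aligned :: "'a rel \<Rightarrow> 'a rel \<Rightarrow> 'a rel \<Rightarrow> bool" where
  "more_aligned P R R' \<longleftrightarrow> (\<forall>x y. (x, y) \<in> P \<longrightarrow> (x, y) \<in> R' \<longrightarrow> (x, y) \<in> R)"

definition unimprovable :: "'a rel \<Rightarrow> 'a rel \<Rightarrow> 'a rel \<Rightarrow> bool" where
  "unimprovable P W R \<longleftrightarrow> ranking R \<and>
     \<not> (\<exists>R'. feasible W R' \<and> R' \<noteq> R \<and> more_aligned P R' R)"

definition regret_free :: "'a rel \<Rightarrow> (('a \<times> 'a) list \<Rightarrow> 'a set) \<Rightarrow> bool" where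
  "regret_free P \<sigma> \<longleftrightarrow> (\<forall>W R. tournament W \<longrightarrow> is_outcome W \<sigma> R \<longrightarrow> unimprovable P W R)"

definition efficient :: "'a rel \<Rightarrow> 'a rel \<Rightarrow> 'a rel \<Rightarrow> bool" where
  "efficient P W R \<longleftrightarrow> (\<forall>x y. (x, y) \<in> P \<longrightarrow> (x, y) \<in> W \<longrightarrow> (x, y) \<in> R)"

end

(*
  The chair keeps, next to the relation Q decided so far, a faithful extension of Q: a ranking
  L containing Q that ranks no pair against the preference P unless Q already does. Offering a
  pair that is adjacent in L and unranked in Q is safe: if it is decided as in L, then L stays
  faithful, and otherwise L with the pair swapped is faithful. Transitive closure stays inside
  L, so every pair that ends up ranked against P was compared directly and thus won in the
  tournament; hence every outcome of such a strategy is efficient, and efficient rankings are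
  unimprovable. W and R only break ties among the safe pairs: the chair prefers one that W
  decides as R does. While the play stays inside R such a pair exists, by efficiency of R
  where L and R differ and by feasibility of R where they coincide.
*)

theory Submission
  imports Defs
begin

section \<open>Rankings and their adjacent pairs\<close>

definition adjacent :: "'a rel \<Rightarrow> 'a \<Rightarrow> 'a \<Rightarrow> bool" where
  "adjacent L x y \<longleftrightarrow> (x, y) \<in> L \<and> \<not> (\<exists>z. (x, z) \<in> L \<and> (z, y) \<in> L)"

lemma ranking_iff: "ranking R \<longleftrightarrow> irrefl R \<and> trans R \<and> total R"
  by (simp add: ranking_def proto_ranking_def)

lemma ranking_asym: "ranking R \<Longrightarrow> asym R"
  by (simp add: ranking_iff asym_on_iff_irrefl_on_if_trans_on)

lemma total_subset_asym_eq:
  assumes "total A" "A \<subseteq> B" "asym B"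
  shows "A = B"
proof
  show "B \<subseteq> A"
  proof (rule subrelI)
    fix u v assume "(u, v) \<in> B"
    then have "(v, u) \<notin> B" "u \<noteq> v" using assms(3) by (auto dest: asymD)
    then show "(u, v) \<in> A" using assms(1,2) by (auto simp: total_on_def)
  qed
qed (fact assms(2))

lemma adjacent_in_trancl:
  assumes "adjacent (S\<^sup>+) u v"
  shows "(u, v) \<in> S"
  using assms unfolding adjacent_def
  by (metis r_into_trancl' tranclE)

lemma trancl_adjacent:
  assumes "finite L" "irrefl L" "trans L"
  shows "L \<subseteq> {(x, y). adjacent L x y}\<^sup>+"
proof -
  let ?between = "\<lambda>a b. {z. (a, z) \<in> L \<and> (z, b) \<in> L}"
  have "(a, b) \<in> {(x, y). adjacent L x y}\<^sup>+" if "(a, b) \<in> L" for a b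
    using that
  proof (induction "card (?between a b)" arbitrary: a b rule: less_induct)
    case less
    show ?case
    proof (cases "adjacent L a b")
      case True
      then show ?thesis by auto
    next
      case False
      then obtain z where az: "(a, z) \<in> L" and zb: "(z, b) \<in> L"
        using less.prems unfolding adjacent_def by blast
      have "?between a b \<subseteq> Range L" by blast
      then have fin: "finite (?between a b)"
        using finite_subset finite_Range[OF assms(1)] by blast
      have "?between a z \<subset> ?between a b" "?between z b \<subset> ?between a b"
        using az zb assms(2,3) by (auto dest: transD irreflD)
      then have "card (?between a z) < card (?between a b)" "card (?between z b) < card (?between a b)"
        using fin by (auto intro: psubset_card_mono)
      then show ?thesis
        using less.hyps az zb by (meson trancl_trans)
    qed
  qed
  then show ?thesis by auto
qed

lemma exists_adjacent_notin:
  assumes "finite L" "irrefl L" "trans L" "trans Q" "\<not> L \<subseteq> Q"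
  shows "\<exists>x y. adjacent L x y \<and> (x, y) \<notin> Q"
proof (rule ccontr)
  assume "\<not> ?thesis"
  then have "{(x, y). adjacent L x y}\<^sup>+ \<subseteq> Q\<^sup>+"
    by (intro trancl_mono_subset) auto
  then show False
    using trancl_adjacent[OF assms(1-3)] assms(4,5) by simp
qed

lemma ranking_swap_adjacent:
  assumes "ranking L" "adjacent L x y"
  shows "ranking (insert (y, x) (L - {(x, y)}))"
proof -
  have irr: "irrefl L" and tr: "trans L" and tot: "total L"
    using assms(1) by (auto simp: ranking_iff)
  have xy: "(x, y) \<in> L" and gap: "\<And>z. (x, z) \<in> L \<Longrightarrow> (z, y) \<notin> L"
    using assms(2) unfolding adjacent_def by blast+
  have "x \<noteq> y" using xy irr by (auto dest: irreflD)
  have "trans (insert (y, x) (L - {(x, y)}))"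
  proof (rule transI)
    fix a b c
    assume ab: "(a, b) \<in> insert (y, x) (L - {(x, y)})"
      and bc: "(b, c) \<in> insert (y, x) (L - {(x, y)})"
    show "(a, c) \<in> insert (y, x) (L - {(x, y)})"
    proof (cases "(a, b) = (y, x)")
      case True
      then have "(x, c) \<in> L" "c \<noteq> y" using bc \<open>x \<noteq> y\<close> by auto
      then have "(y, c) \<in> L" using tot gap by (auto simp: total_on_def)
      then show ?thesis using True \<open>x \<noteq> y\<close> by simp
    next
      case False
      then have "(a, b) \<in> L" "(a, b) \<noteq> (x, y)" using ab by auto
      show ?thesis
      proof (cases "(b, c) = (y, x)")
        case True
        then have "a \<noteq> x" using \<open>(a, b) \<noteq> (x, y)\<close> by auto
        then have "(a, x) \<in> L" using tot gap \<open>(a, b) \<in> L\<close> True by (auto simp: total_on_def)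
        then show ?thesis using True \<open>a \<noteq> x\<close> by simp
      next
        case False
        then have "(b, c) \<in> L" using bc by auto
        then have "(a, c) \<in> L" using \<open>(a, b) \<in> L\<close> tr by (blast dest: transD)
        moreover have "(a, c) \<noteq> (x, y)" using gap \<open>(a, b) \<in> L\<close> \<open>(b, c) \<in> L\<close> by blast
        ultimately show ?thesis by simp
      qed
    qed
  qed
  moreover have "irrefl (insert (y, x) (L - {(x, y)}))"
    using irr \<open>x \<noteq> y\<close> by (auto simp: irrefl_def)
  moreover have "total (insert (y, x) (L - {(x, y)}))"
    using tot by (auto simp: total_on_def)
  ultimately show ?thesis by (simp add: ranking_iff)
qed

section \<open>Faithful extensions\<close>

definition faithful_extension :: "'a rel \<Rightarrow> 'a rel \<Rightarrow> 'a rel \<Rightarrow> bool" where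
  "faithful_extension P Q L \<longleftrightarrow> ranking L \<and> Q \<subseteq> L \<and> L \<inter> P\<inverse> \<subseteq> Q"

lemma faithful_extension_trancl:
  assumes "faithful_extension P Q L"
  shows "faithful_extension P (Q\<^sup>+) L" and "Q\<^sup>+ \<inter> P\<inverse> = Q \<inter> P\<inverse>"
proof -
  have "Q\<^sup>+ \<subseteq> L"
    using assms trancl_mono_subset[of Q L]
    by (simp add: faithful_extension_def ranking_iff)
  then show "faithful_extension P (Q\<^sup>+) L" and "Q\<^sup>+ \<inter> P\<inverse> = Q \<inter> P\<inverse>"
    using assms by (auto simp: faithful_extension_def)
qed

lemma unranked_if_adjacent:
  assumes "faithful_extension P Q L" "adjacent L x y" "(x, y) \<notin> Q"
  shows "unranked Q x y"
  using assms ranking_asym[of L]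
  by (auto simp: faithful_extension_def adjacent_def unranked_def ranking_iff
      dest: asymD irreflD)

lemma exists_adjacent_unranked:
  fixes Q L :: "('a::finite) rel"
  assumes "faithful_extension P Q L" "trans Q" "\<not> total Q"
  shows "\<exists>x y. adjacent L x y \<and> unranked Q x y"
proof -
  have L: "ranking L" "Q \<subseteq> L" using assms(1) by (auto simp: faithful_extension_def)
  then have "\<not> L \<subseteq> Q"
    using assms(3) by (auto simp: ranking_iff total_on_def)
  then show ?thesis
    using exists_adjacent_notin[of L Q] unranked_if_adjacent[OF assms(1)] L(1) assms(2)
    by (auto simp: ranking_iff)
qed

lemma faithful_extension_compare:
  assumes "faithful_extension P Q L" "adjacent L x y" "(x, y) \<notin> Q"
    and "(a, b) = (x, y) \<or> (a, b) = (y, x)"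
  shows "\<exists>L'. faithful_extension P (insert (a, b) Q) L'"
  using assms(4)
proof
  assume "(a, b) = (x, y)"
  then show ?thesis
    using assms(1,2) by (auto simp: faithful_extension_def adjacent_def)
next
  assume "(a, b) = (y, x)"
  moreover have "faithful_extension P (insert (y, x) Q) (insert (y, x) (L - {(x, y)}))"
    using assms(1-3) ranking_swap_adjacent[of L x y] by (auto simp: faithful_extension_def)
  ultimately show ?thesis by blast
qed

lemma rel_hist_snoc: "rel_hist (h @ [p]) = (insert p (rel_hist h))\<^sup>+"
  by (simp add: rel_hist_def)

lemma rel_hist_eq_trancl: "rel_hist h = (set h)\<^sup>+"
proof (induction h rule: rev_induct)
  case (snoc p h)
  then show ?case
    using trancl_trancl_Un[of "set h" "{p}"] by (simp add: rel_hist_snoc)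
qed (simp add: rel_hist_def)

lemma reaches_subset: "reaches W \<sigma> h \<Longrightarrow> set h \<subseteq> W"
  by (induction rule: reaches.induct) auto

lemma feasible_adjacent:
  assumes "feasible W R" "adjacent R u v"
  shows "(u, v) \<in> W"
proof -
  obtain \<sigma> h where h: "reaches W \<sigma> h" "R = (set h)\<^sup>+"
    using assms(1) rel_hist_eq_trancl unfolding feasible_def is_outcome_def by metis
  then have "(u, v) \<in> set h" using adjacent_in_trancl assms(2) by simp
  then show ?thesis using reaches_subset[OF h(1)] by blast
qed

lemma efficient_if_inversions_subset:
  assumes "total R" "irrefl P" "asym W" "R \<inter> P\<inverse> \<subseteq> W"
  shows "efficient P W R"
  unfolding efficient_def
proof (intro allI impI)
  fix a b assume "(a, b) \<in> P" "(a, b) \<in> W"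
  then have "a \<noteq> b" "(b, a) \<notin> W" using assms(2,3) by (auto dest: irreflD asymD)
  then show "(a, b) \<in> R" using assms(1,4) \<open>(a, b) \<in> P\<close> by (auto simp: total_on_def)
qed

text \<open>A better aligned feasible ranking differs from R on a pair it ranks adjacently, so that
  pair was decided by W directly; efficiency of R and alignment exclude both orientations.\<close>

lemma unimprovable_if_efficient:
  fixes R :: "('a::finite) rel"
  assumes "total P" "ranking R" "efficient P W R"
  shows "unimprovable P W R"
  unfolding unimprovable_def
proof (intro conjI notI, fact assms(2), elim exE conjE)
  fix R' assume feas: "feasible W R'" and "R' \<noteq> R" and align: "more_aligned P R' R"
  have R': "ranking R'" using feas by (simp add: feasible_def)
  then have "\<not> R' \<subseteq> R"
    using \<open>R' \<noteq> R\<close> total_subset_asym_eq ranking_asym[OF assms(2)]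
    by (auto simp: ranking_iff)
  then obtain u v where uv: "adjacent R' u v" "(u, v) \<notin> R"
    using exists_adjacent_notin[of R' R] R' assms(2) by (auto simp: ranking_iff)
  have "(u, v) \<in> W" using feasible_adjacent[OF feas uv(1)] .
  moreover have "u \<noteq> v" "(v, u) \<notin> R'"
    using uv(1) R' ranking_asym[OF R'] by (auto simp: adjacent_def dest: asymD)
  moreover have "(v, u) \<in> R"
    using uv assms(2) \<open>u \<noteq> v\<close> by (auto simp: ranking_iff total_on_def)
  moreover have "(u, v) \<in> P \<or> (v, u) \<in> P"
    using assms(1) \<open>u \<noteq> v\<close> by (auto simp: total_on_def)
  ultimately show False
    using assms(3) align uv(2) unfolding efficient_def more_aligned_def by blast
qed

section \<open>The chair's strategy\<close>

definition safe_pairs :: "'a rel \<Rightarrow> 'a rel \<Rightarrow> 'a rel" where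
  "safe_pairs P Q = {(x, y). unranked Q x y \<and> (\<exists>L. faithful_extension P Q L \<and> adjacent L x y)}"

definition agreeing_pairs :: "'a rel \<Rightarrow> 'a rel \<Rightarrow> 'a rel" where
  "agreeing_pairs W R = {(x, y). ((x, y) \<in> W \<longrightarrow> (x, y) \<in> R) \<and> ((y, x) \<in> W \<longrightarrow> (y, x) \<in> R)}"

text \<open>The last alternative is only needed at histories that the strategy itself never
  produces: along its own plays a safe pair always exists.\<close>

definition offered_pairs :: "'a rel \<Rightarrow> 'a rel \<Rightarrow> 'a rel \<Rightarrow> 'a rel \<Rightarrow> 'a rel" where
  "offered_pairs P W R Q =
     (if safe_pairs P Q \<inter> agreeing_pairs W R \<noteq> {} then safe_pairs P Q \<inter> agreeing_pairs W R
      else if safe_pairs P Q \<noteq> {} then safe_pairs P Q else {(x, y). unranked Q x y})"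

definition chair_strategy :: "'a rel \<Rightarrow> 'a rel \<Rightarrow> 'a rel \<Rightarrow> ('a \<times> 'a) list \<Rightarrow> 'a set" where
  "chair_strategy P W R h = (\<lambda>(x, y). {x, y}) (SOME p. p \<in> offered_pairs P W R (rel_hist h))"

lemma chair_strategy_offers:
  assumes "X \<in> {safe_pairs P (rel_hist h) \<inter> agreeing_pairs W R, safe_pairs P (rel_hist h),
      {(x, y). unranked (rel_hist h) x y}}" and "X \<noteq> {}"
  shows "\<exists>x y. chair_strategy P W R h = {x, y} \<and> (x, y) \<in> X"
proof -
  let ?C = "offered_pairs P W R (rel_hist h)"
  have "?C \<noteq> {}" "?C \<subseteq> X"
    using assms unfolding offered_pairs_def safe_pairs_def by auto
  then have "(SOME p. p \<in> ?C) \<in> X" using some_in_eq[of ?C] by blast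
  moreover obtain x y where "(SOME p. p \<in> ?C) = (x, y)" by fastforce
  ultimately show ?thesis by (auto simp: chair_strategy_def)
qed

lemma strategy_chair_strategy:
  fixes P W R :: "'a rel"
  shows "strategy (chair_strategy P W R)"
  unfolding strategy_def
proof (intro allI impI)
  fix h :: "('a \<times> 'a) list" assume "history h \<and> \<not> total (rel_hist h)"
  then have "{(x, y). unranked (rel_hist h) x y} \<noteq> {}"
    by (auto simp: total_on_def unranked_def)
  then show "\<exists>x y. chair_strategy P W R h = {x, y} \<and> unranked (rel_hist h) x y"
    using chair_strategy_offers[of "{(x, y). unranked (rel_hist h) x y}"] by auto
qed

lemma reaches_chair_strategy_invariant:
  fixes P :: "('a::finite) rel"
  assumes "ranking P" "reaches W' (chair_strategy P W R) h"
  shows "(\<exists>L. faithful_extension P (rel_hist h) L) \<and> rel_hist h \<inter> P\<inverse> \<subseteq> W'"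
  using assms(2)
proof (induction rule: reaches.induct)
  case Nil
  have "faithful_extension P {} P"
    using assms(1) ranking_asym[OF assms(1)] by (auto simp: faithful_extension_def dest: asymD)
  then show ?case by (auto simp: rel_hist_def)
next
  case (Step h a b)
  let ?Q = "rel_hist h"
  obtain L where "faithful_extension P ?Q L" using Step.IH by blast
  then have "safe_pairs P ?Q \<noteq> {}"
    using exists_adjacent_unranked[of P ?Q L] Step.hyps(2) rel_hist_eq_trancl[of h]
    by (auto simp: safe_pairs_def)
  then obtain x y where xy: "chair_strategy P W R h = {x, y}" "(x, y) \<in> safe_pairs P ?Q"
    using chair_strategy_offers by blast
  then obtain L where L: "faithful_extension P ?Q L" "adjacent L x y" "(x, y) \<notin> ?Q"
    by (auto simp: safe_pairs_def unranked_def)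
  have "(a, b) = (x, y) \<or> (a, b) = (y, x)"
    using xy(1) Step.hyps(3) by (auto simp: doubleton_eq_iff)
  then obtain L' where L': "faithful_extension P (insert (a, b) ?Q) L'"
    using faithful_extension_compare[OF L] by blast
  show ?case
    using faithful_extension_trancl[OF L'] Step.IH Step.hyps(5)
    by (auto simp: rel_hist_snoc)
qed

lemma regret_free_chair_strategy:
  fixes P :: "('a::finite) rel"
  assumes "ranking P"
  shows "regret_free P (chair_strategy P W R)"
  unfolding regret_free_def
proof (intro allI impI)
  fix W' R' assume "tournament W'" "is_outcome W' (chair_strategy P W R) R'"
  then obtain h where h: "reaches W' (chair_strategy P W R) h" "total R'" "R' = rel_hist h"
    by (auto simp: is_outcome_def)
  obtain L where "faithful_extension P R' L" and inv: "R' \<inter> P\<inverse> \<subseteq> W'"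
    using reaches_chair_strategy_invariant[OF assms h(1)] h(3) by blast
  then have "ranking R'"
    using h(2,3) rel_hist_eq_trancl[of h]
    by (auto simp: faithful_extension_def ranking_iff irrefl_def)
  moreover have "efficient P W' R'"
    using efficient_if_inversions_subset[OF h(2) _ _ inv] assms \<open>tournament W'\<close>
    by (simp add: ranking_iff tournament_def)
  ultimately show "unimprovable P W' R'"
    using unimprovable_if_efficient assms by (auto simp: ranking_iff)
qed

lemma exists_agreeing_safe_pair:
  fixes P W R Q :: "('a::finite) rel"
  assumes "ranking P" "tournament W" "ranking R" "feasible W R" "efficient P W R"
    and "faithful_extension P Q L" "trans Q" "\<not> total Q" "Q \<subseteq> R"
  shows "safe_pairs P Q \<inter> agreeing_pairs W R \<noteq> {}"
proof (cases "L \<subseteq> R")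
  case True
  have L: "ranking L" "Q \<subseteq> L" using assms(6) by (auto simp: faithful_extension_def)
  then have "L = R"
    using True total_subset_asym_eq ranking_asym[OF assms(3)] by (auto simp: ranking_iff)
  obtain u v where uv: "adjacent L u v" "unranked Q u v"
    using exists_adjacent_unranked[OF assms(6-8)] by blast
  then have "(u, v) \<in> W" using feasible_adjacent[OF assms(4)] \<open>L = R\<close> by blast
  then have "(u, v) \<in> agreeing_pairs W R"
    using uv(1) \<open>L = R\<close> assms(2)
    by (auto simp: agreeing_pairs_def adjacent_def tournament_def dest: asymD)
  then show ?thesis using uv assms(6) by (auto simp: safe_pairs_def)
next
  case False
  have L: "ranking L" "Q \<subseteq> L" "L \<inter> P\<inverse> \<subseteq> Q"
    using assms(6) by (auto simp: faithful_extension_def)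
  obtain u v where uv: "adjacent L u v" "(u, v) \<notin> R"
    using exists_adjacent_notin[of L R] False L(1) assms(3)
    by (auto simp: ranking_iff)
  have "(u, v) \<in> L" "u \<noteq> v"
    using uv(1) L(1) by (auto simp: adjacent_def ranking_iff dest: irreflD)
  then have "(u, v) \<in> P" "(v, u) \<in> R"
    using uv(2) L(3) assms(1,3,9) by (auto simp: ranking_iff total_on_def)
  then have "(u, v) \<notin> W" using assms(5) uv(2) by (auto simp: efficient_def)
  then have "(u, v) \<in> agreeing_pairs W R"
    using \<open>(v, u) \<in> R\<close> by (simp add: agreeing_pairs_def)
  moreover have "unranked Q u v"
    using unranked_if_adjacent[OF assms(6) uv(1)] uv(2) assms(9) by blast
  ultimately show ?thesis using uv(1) assms(6) by (auto simp: safe_pairs_def)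
qed

lemma reaches_total_within:
  fixes R :: "('a::finite) rel"
  assumes "trans R"
    and offer: "\<And>h. reaches W \<sigma> h \<Longrightarrow> rel_hist h \<subseteq> R \<Longrightarrow> \<not> total (rel_hist h) \<Longrightarrow>
      \<exists>x y. \<sigma> h = {x, y} \<and> unranked (rel_hist h) x y \<and> (x, y) \<in> W \<and> (x, y) \<in> R"
  shows "\<exists>h. reaches W \<sigma> h \<and> total (rel_hist h) \<and> rel_hist h \<subseteq> R"
proof -
  have "\<exists>h'. reaches W \<sigma> h' \<and> total (rel_hist h') \<and> rel_hist h' \<subseteq> R"
    if "reaches W \<sigma> h" "rel_hist h \<subseteq> R" for h
    using that
  proof (induction "card (- rel_hist h)" arbitrary: h rule: less_induct)
    case less
    show ?case
    proof (cases "total (rel_hist h)")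
      case True
      then show ?thesis using less.prems by blast
    next
      case False
      then obtain x y where xy: "\<sigma> h = {x, y}" "unranked (rel_hist h) x y" "(x, y) \<in> W" "(x, y) \<in> R"
        using offer less.prems by blast
      let ?h' = "h @ [(x, y)]"
      have "reaches W \<sigma> ?h'"
        using reaches.Step[OF less.prems(1) False xy(1)] xy(2,3) by (simp add: unranked_def)
      moreover have "rel_hist ?h' \<subseteq> R"
        using less.prems(2) xy(4) trancl_mono_subset[of _ R] assms(1) by (simp add: rel_hist_snoc)
      moreover have "- rel_hist ?h' \<subset> - rel_hist h"
        using xy(2) by (auto simp: rel_hist_snoc unranked_def)
      then have "card (- rel_hist ?h') < card (- rel_hist h)"
        by (simp add: psubset_card_mono)
      ultimately show ?thesis using less.hyps by blast
    qed
  qed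
  moreover have "rel_hist [] \<subseteq> R" by (simp add: rel_hist_def)
  ultimately show ?thesis using reaches.Nil by blast
qed

lemma chair_strategy_outcome:
  fixes P W R :: "('a::finite) rel"
  assumes "ranking P" "tournament W" "ranking R" "feasible W R" "efficient P W R"
  shows "is_outcome W (chair_strategy P W R) R"
proof -
  have "\<exists>x y. chair_strategy P W R h = {x, y} \<and> unranked (rel_hist h) x y \<and> (x, y) \<in> W \<and> (x, y) \<in> R"
    if h: "reaches W (chair_strategy P W R) h" "rel_hist h \<subseteq> R" "\<not> total (rel_hist h)" for h
  proof -
    obtain L where "faithful_extension P (rel_hist h) L"
      using reaches_chair_strategy_invariant[OF assms(1) h(1)] by blast
    moreover have "trans (rel_hist h)" by (simp add: rel_hist_eq_trancl)
    ultimately have "safe_pairs P (rel_hist h) \<inter> agreeing_pairs W R \<noteq> {}"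
      using exists_agreeing_safe_pair[OF assms] h(2,3) by blast
    then obtain x y where xy: "chair_strategy P W R h = {x, y}"
      "(x, y) \<in> safe_pairs P (rel_hist h)" "(x, y) \<in> agreeing_pairs W R"
      using chair_strategy_offers by blast
    have un: "unranked (rel_hist h) x y" using xy(2) by (simp add: safe_pairs_def)
    then consider "(x, y) \<in> W" | "(y, x) \<in> W"
      using assms(2) by (auto simp: tournament_def total_on_def unranked_def)
    then show ?thesis
    proof cases
      case 1
      then have "(x, y) \<in> R" using xy(3) by (simp add: agreeing_pairs_def)
      then show ?thesis using 1 xy(1) un by blast
    next
      case 2
      then have "(y, x) \<in> R" using xy(3) by (simp add: agreeing_pairs_def)
      moreover have "chair_strategy P W R h = {y, x}" "unranked (rel_hist h) y x"
        using xy(1) un by (auto simp: insert_commute unranked_def)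
      ultimately show ?thesis using 2 by blast
    qed
  qed
  then obtain h where "reaches W (chair_strategy P W R) h" "total (rel_hist h)" "rel_hist h \<subseteq> R"
    using reaches_total_within[of R W "chair_strategy P W R"] assms(3)
    by (auto simp: ranking_iff)
  moreover then have "rel_hist h = R"
    using total_subset_asym_eq ranking_asym[OF assms(3)] by blast
  ultimately show ?thesis by (auto simp: is_outcome_def)
qed

theorem proposition1:
  fixes P W R :: "('a::finite) rel"
  assumes "ranking P"
    and "tournament W"
    and "ranking R"
    and "feasible W R"
    and "efficient P W R"
  shows "\<exists>\<sigma>. strategy \<sigma> \<and> regret_free P \<sigma> \<and> is_outcome W \<sigma> R"
  using strategy_chair_strategy regret_free_chair_strategy[OF assms(1)]
    chair_strategy_outcome[OF assms] by blast

end
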